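(* Let $m>1$, $\chi>0$, $\alpha>0$, and let $p\ge2$ be an integer. (a) If $\chi>C_p$, then neither $\mathcal F^p_m$ nor $\mathcal F^p_{m,\alpha}$ has a critical point in $\mathcal R^p$. (b) If $\chi<C_p$, then $\mathcal F^p_m$ has no critical point in $\mathcal R^p$. (c) If $\chi=C_p$, then $\mathcal F^p_{m,\alpha}$ has no critical point in $\mathcal R^p$.
   Context: $\mathcal R^p=\{X\in\mathbb R^p: X_1<\dots<X_p,\ \sum_iX_i=0\}$. $\mathcal F^p_{m,\alpha}(X)=\frac1{m-1}\sum_{i=1}^{p-1}(X_{i+1}-X_i)^{1-m}-\frac{\chi}{m-1}\sum_{1\le i\ne j\le p}|X_i-X_j|^{1-m}+\alpha\frac{|X|^2}{2}$, $\mathcal F^p_m=\mathcal F^p_{m,0}$. $C_p$ is defined by $\frac1{C_p}=\max_{X\in\mathcal R^p}\frac{\sum_{1\le i\ne j\le p}|X_j-X_i|^{1-m}}{\sum_{i=1}^{p-1}(X_{i+1}-X_i)^{1-m}}$. A critical point is a point of $\mathcal R^p$ where the Euclidean gradient vanishes. *)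

theory Defs
  imports "HOL-Analysis.Analysis"
begin

text \<open>Points of R^p are represented as functions X :: nat \<Rightarrow> real, of which only
  the coordinates X 1, ..., X p matter.\<close>

definition Rp :: "nat \<Rightarrow> (nat \<Rightarrow> real) set" where
  "Rp p = {X. (\<forall>i\<in>{1..<p}. X i < X (Suc i)) \<and> (\<Sum>i=1..p. X i) = 0}"

definition Fma :: "real \<Rightarrow> real \<Rightarrow> real \<Rightarrow> nat \<Rightarrow> (nat \<Rightarrow> real) \<Rightarrow> real" where
  "Fma m chi \<alpha> p X =
     1 / (m - 1) * (\<Sum>i=1..<p. (X (Suc i) - X i) powr (1 - m))
     - chi / (m - 1) * (\<Sum>i\<in>{1..p}. \<Sum>j\<in>{1..p} - {i}. \<bar>X i - X j\<bar> powr (1 - m))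
     + \<alpha> * (\<Sum>i=1..p. (X i)\<^sup>2) / 2"

definition critical_point :: "real \<Rightarrow> real \<Rightarrow> real \<Rightarrow> nat \<Rightarrow> (nat \<Rightarrow> real) \<Rightarrow> bool" where
  "critical_point m chi \<alpha> p X \<longleftrightarrow> X \<in> Rp p \<and>
     (\<forall>i\<in>{1..p}. ((\<lambda>t. Fma m chi \<alpha> p (X(i := t))) has_real_derivative 0) (at (X i)))"

definition Cp :: "real \<Rightarrow> nat \<Rightarrow> real" where
  "Cp m p = 1 / (SUP X\<in>Rp p.
      (\<Sum>i\<in>{1..p}. \<Sum>j\<in>{1..p} - {i}. \<bar>X j - X i\<bar> powr (1 - m))
      / (\<Sum>i=1..<p. (X (Suc i) - X i) powr (1 - m)))"

end

theory Submission
  imports Defs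
begin

text \<open>Let X be a critical point and Y any point of R^p. Pairing the gradient equations at X
  with the test vector W_k = \<Sum>_{l<k} (X_{l+1} - X_l)^m (Y_{l+1} - Y_l)^{1-m} turns the
  neighbour terms into exactly A(Y) = \<Sum>_i (Y_{i+1} - Y_i)^{1-m}, while Jensen's inequality for
  the convex function t^{1-m} bounds each pair term from below by |Y_i - Y_j|^{1-m}. Hence
  A(Y) \<ge> \<chi> B(Y) + \<alpha> \<Sum>_k W_k X_k, with equality for Y = X. For \<alpha> = 0 the ratio B/A is
  therefore maximal at X with value 1/\<chi>, so C_p = \<chi>. For \<alpha> > 0 the tail sums of X are
  positive (X is increasing with zero sum), so \<Sum>_k W_k X_k \<ge> \<delta> A(Y) for some \<delta> > 0
  independent of Y; then B/A \<le> (1 - \<alpha>\<delta>)/\<chi> everywhere and C_p > \<chi>.\<close>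

lemma Rp_less:
  assumes X: "X \<in> Rp p" and "1 \<le> i" "i < j" "j \<le> p"
  shows "X i < X j"
proof -
  have "Suc i \<le> j" using \<open>i < j\<close> by simp
  then show ?thesis using \<open>j \<le> p\<close>
  proof (induction j rule: dec_induct)
    case base
    then show ?case using X \<open>1 \<le> i\<close> unfolding Rp_def by simp
  next
    case (step n)
    then have "X n < X (Suc n)" using X \<open>1 \<le> i\<close> unfolding Rp_def by simp
    with step show ?case by simp
  qed
qed

lemma Rp_neq:
  assumes "X \<in> Rp p" "i \<in> {1..p}" "j \<in> {1..p}" "i \<noteq> j"
  shows "X i \<noteq> X j"
  using Rp_less[OF assms(1), of i j] Rp_less[OF assms(1), of j i] assms(2-4)
  by (cases "i < j") auto

lemma Rp_tail_sum_pos: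
  assumes X: "X \<in> Rp p" and l: "1 \<le> l" "l < p"
  shows "(\<Sum>k\<in>{Suc l..p}. X k) > 0"
proof (cases "X (Suc l) > 0")
  case True
  have "X k > 0" if "k \<in> {Suc l..p}" for k
    using Rp_less[OF X, of "Suc l" k] True that by (cases "k = Suc l") auto
  then show ?thesis using l by (intro sum_pos) auto
next
  case False
  have "X k < 0" if "k \<in> {1..l}" for k
    using Rp_less[OF X, of k "Suc l"] False that l by auto
  then have "(\<Sum>k\<in>{1..l}. X k) < 0"
    using l sum_strict_mono[of "{1..l}" X "\<lambda>_. 0"] by auto
  moreover have "(\<Sum>k\<in>{1..l}. X k) + (\<Sum>k\<in>{Suc l..p}. X k) = 0"
  proof -
    have "{1..p} = {1..l} \<union> {Suc l..p}" "{1..l} \<inter> {Suc l..p} = {}" using l by auto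
    then show ?thesis using X unfolding Rp_def by (simp add: sum.union_disjoint[symmetric])
  qed
  ultimately show ?thesis by simp
qed

lemma sum_partial_sums_mult:
  fixes c x :: "nat \<Rightarrow> 'a :: comm_semiring_1"
  shows "(\<Sum>k\<in>{1..p}. (\<Sum>l\<in>{1..<k}. c l) * x k) = (\<Sum>l\<in>{1..<p}. c l * (\<Sum>k\<in>{Suc l..p}. x k))"
proof -
  have "(\<Sum>k\<in>{1..p}. (\<Sum>l\<in>{1..<k}. c l) * x k) = (\<Sum>k\<in>{1..p}. \<Sum>l\<in>{l. l \<in> {1..<p} \<and> l < k}. c l * x k)"
    by (intro sum.cong) (auto simp: sum_distrib_right intro!: sum.cong)
  also have "\<dots> = (\<Sum>l\<in>{1..<p}. \<Sum>k\<in>{k. k \<in> {1..p} \<and> l < k}. c l * x k)"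
    by (rule sum.swap_restrict) auto
  also have "\<dots> = (\<Sum>l\<in>{1..<p}. c l * (\<Sum>k\<in>{Suc l..p}. x k))"
    by (intro sum.cong) (auto simp: sum_distrib_left intro!: sum.cong)
  finally show ?thesis .
qed

lemma sum_mult_of_bool_diff:
  assumes "finite A" "a \<in> A" "b \<in> A"
  shows "(\<Sum>k\<in>A. W k * ((of_bool (k = a) - of_bool (k = b)) * D)) = (W a - W b) * (D :: real)"
  using assms
  by (simp add: algebra_simps sum_subtractf sum_distrib_left[symmetric] of_bool_def
      if_distrib[of "\<lambda>c. _ * c"] cong: if_cong)

lemma has_real_derivative_powr_pos:
  fixes x q :: real
  assumes "x > 0"
  shows "((\<lambda>x. x powr q) has_real_derivative q * (x powr q / x)) (at x)"
  using has_real_derivative_powr[OF assms, of q] assms by (simp add: powr_diff)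

lemma has_real_derivative_abs_powr:
  fixes x q :: real
  assumes "x \<noteq> 0"
  shows "((\<lambda>x. \<bar>x\<bar> powr q) has_real_derivative q * (\<bar>x\<bar> powr q / x)) (at x)"
proof (cases "x > 0")
  case True
  have "\<forall>\<^sub>F y in nhds x. \<bar>y\<bar> powr q = y powr q"
    using eventually_nhds_in_open[of "{0<..}" x] True by (auto elim!: eventually_mono)
  then show ?thesis
    using has_real_derivative_powr_pos[OF True, of q] True by (simp add: DERIV_cong_ev)
next
  case False
  then have neg: "x < 0" using assms by simp
  have "\<forall>\<^sub>F y in nhds x. \<bar>y\<bar> powr q = (- y) powr q"
    using eventually_nhds_in_open[of "{..<0}" x] neg by (auto elim!: eventually_mono)
  moreover have "((\<lambda>y. (- y) powr q) has_real_derivative q * ((- x) powr q / (- x)) * (- 1)) (at x)"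
    by (rule DERIV_chain2[OF has_real_derivative_powr_pos]) (use neg in \<open>auto intro!: derivative_eq_intros\<close>)
  ultimately show ?thesis
    using neg by (simp add: DERIV_cong_ev)
qed

lemma has_real_derivative_update_diff:
  fixes X :: "'a \<Rightarrow> real"
  assumes "(\<phi> has_real_derivative D) (at (X a - X b))"
  shows "((\<lambda>t. \<phi> ((X(k := t)) a - (X(k := t)) b)) has_real_derivative
           (of_bool (k = a) - of_bool (k = b)) * D) (at (X k))"
proof -
  consider "k = a" "k = b" | "k = a" "k \<noteq> b" | "k \<noteq> a" "k = b" | "k \<noteq> a" "k \<noteq> b" by blast
  then show ?thesis
  proof cases
    case 2
    have "((\<lambda>t. \<phi> (t - X b)) has_real_derivative D * 1) (at (X k))"
      by (rule DERIV_chain2[where f=\<phi>]) (use assms 2 in \<open>auto intro!: derivative_eq_intros\<close>)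
    with 2 show ?thesis by simp
  next
    case 3
    have "((\<lambda>t. \<phi> (X a - t)) has_real_derivative D * (- 1)) (at (X k))"
      by (rule DERIV_chain2[where f=\<phi>]) (use assms 3 in \<open>auto intro!: derivative_eq_intros\<close>)
    with 3 show ?thesis by simp
  qed simp_all
qed

lemma Fma_partial_derivative:
  assumes m: "m > 1" and X: "X \<in> Rp p" and k: "k \<in> {1..p}"
  shows "((\<lambda>t. Fma m chi \<alpha> p (X(k := t))) has_real_derivative
     - (\<Sum>i=1..<p. (of_bool (k = Suc i) - of_bool (k = i))
                     * ((X (Suc i) - X i) powr (1 - m) / (X (Suc i) - X i)))
     + chi * (\<Sum>i\<in>{1..p}. \<Sum>j\<in>{1..p} - {i}. (of_bool (k = i) - of_bool (k = j))
                     * (\<bar>X i - X j\<bar> powr (1 - m) / (X i - X j)))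
     + \<alpha> * X k) (at (X k))"
    (is "(_ has_real_derivative - ?N + chi * ?P + _) _")
proof -
  have neighbours: "((\<lambda>t. \<Sum>i=1..<p. ((X(k := t)) (Suc i) - (X(k := t)) i) powr (1 - m))
      has_real_derivative (1 - m) * ?N) (at (X k))"
  proof (rule DERIV_cong[OF DERIV_sum])
    show "((\<lambda>t. ((X(k := t)) (Suc i) - (X(k := t)) i) powr (1 - m)) has_real_derivative
        (of_bool (k = Suc i) - of_bool (k = i))
        * ((1 - m) * ((X (Suc i) - X i) powr (1 - m) / (X (Suc i) - X i)))) (at (X k))"
      if "i \<in> {1..<p}" for i
      using X that unfolding Rp_def
      by (intro has_real_derivative_update_diff has_real_derivative_powr_pos) auto
  qed (simp add: sum_distrib_left mult_ac)
  have pairs: "((\<lambda>t. \<Sum>i\<in>{1..p}. \<Sum>j\<in>{1..p} - {i}. \<bar>(X(k := t)) i - (X(k := t)) j\<bar> powr (1 - m))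
      has_real_derivative (1 - m) * ?P) (at (X k))"
  proof (rule DERIV_cong[OF DERIV_sum[OF DERIV_sum]])
    show "((\<lambda>t. \<bar>(X(k := t)) i - (X(k := t)) j\<bar> powr (1 - m)) has_real_derivative
        (of_bool (k = i) - of_bool (k = j))
        * ((1 - m) * (\<bar>X i - X j\<bar> powr (1 - m) / (X i - X j)))) (at (X k))"
      if "i \<in> {1..p}" "j \<in> {1..p} - {i}" for i j
      using Rp_neq[OF X, of i j] that
      by (intro has_real_derivative_update_diff has_real_derivative_abs_powr) auto
  qed (simp add: sum_distrib_left mult_ac)
  have squares: "((\<lambda>t. \<Sum>i=1..p. ((X(k := t)) i)\<^sup>2) has_real_derivative 2 * X k) (at (X k))"
  proof (rule DERIV_cong[OF DERIV_sum])
    show "((\<lambda>t. ((X(k := t)) i)\<^sup>2) has_real_derivative of_bool (i = k) * (2 * X k)) (at (X k))"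
      for i
      by (cases "i = k") (auto intro!: derivative_eq_intros)
  qed (use k in simp)
  have "((\<lambda>t. Fma m chi \<alpha> p (X(k := t))) has_real_derivative
     1 / (m - 1) * ((1 - m) * ?N) - chi / (m - 1) * ((1 - m) * ?P) + \<alpha> * (2 * X k) / 2) (at (X k))"
    unfolding Fma_def by (intro DERIV_add DERIV_diff DERIV_cmult DERIV_cdivide neighbours pairs squares)
  moreover have "c / (m - 1) * ((1 - m) * N) = - (c * N)" for c N :: real
    using m by (simp add: field_simps)
  then have "1 / (m - 1) * ((1 - m) * ?N) - chi / (m - 1) * ((1 - m) * ?P) + \<alpha> * (2 * X k) / 2
      = - ?N + chi * ?P + \<alpha> * X k"
    by (simp only:)
  ultimately show ?thesis by (simp only:)
qed

lemma critical_point_weighted_identity: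
  assumes m: "m > 1" and crit: "critical_point m chi \<alpha> p X"
  shows "(\<Sum>i=1..<p. (W (Suc i) - W i) * ((X (Suc i) - X i) powr (1 - m) / (X (Suc i) - X i)))
       = chi * (\<Sum>i\<in>{1..p}. \<Sum>j\<in>{1..p} - {i}. (W i - W j) * (\<bar>X i - X j\<bar> powr (1 - m) / (X i - X j)))
         + \<alpha> * (\<Sum>k\<in>{1..p}. W k * X k)"
proof -
  have X: "X \<in> Rp p" using crit unfolding critical_point_def by simp
  define N where "N k = (\<Sum>i=1..<p. (of_bool (k = Suc i) - of_bool (k = i))
      * ((X (Suc i) - X i) powr (1 - m) / (X (Suc i) - X i)))" for k
  define P where "P k = (\<Sum>i\<in>{1..p}. \<Sum>j\<in>{1..p} - {i}. (of_bool (k = i) - of_bool (k = j))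
      * (\<bar>X i - X j\<bar> powr (1 - m) / (X i - X j)))" for k
  have gradient: "- N k + chi * P k + \<alpha> * X k = 0" if "k \<in> {1..p}" for k
    using DERIV_unique[OF Fma_partial_derivative[OF m X that]] crit that
    unfolding critical_point_def N_def P_def by blast
  have "0 = (\<Sum>k\<in>{1..p}. W k * (- N k + chi * P k + \<alpha> * X k))"
    using gradient by simp
  also have "\<dots> = - (\<Sum>k\<in>{1..p}. W k * N k) + chi * (\<Sum>k\<in>{1..p}. W k * P k)
      + \<alpha> * (\<Sum>k\<in>{1..p}. W k * X k)"
    by (simp add: distrib_left right_diff_distrib sum.distrib sum_subtractf sum_negf
        sum_distrib_left mult.left_commute)
  also have "(\<Sum>k\<in>{1..p}. W k * N k)
      = (\<Sum>i=1..<p. (W (Suc i) - W i) * ((X (Suc i) - X i) powr (1 - m) / (X (Suc i) - X i)))"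
    unfolding N_def sum_distrib_left
    by (subst sum.swap, intro sum.cong refl sum_mult_of_bool_diff) auto
  also have "(\<Sum>k\<in>{1..p}. W k * P k) = (\<Sum>i\<in>{1..p}. \<Sum>j\<in>{1..p} - {i}. \<Sum>k\<in>{1..p}.
      W k * ((of_bool (k = i) - of_bool (k = j)) * (\<bar>X i - X j\<bar> powr (1 - m) / (X i - X j))))"
    unfolding P_def sum_distrib_left
    by (rule trans[OF sum.swap], rule sum.cong[OF refl], rule sum.swap)
  also have "\<dots>
      = (\<Sum>i\<in>{1..p}. \<Sum>j\<in>{1..p} - {i}. (W i - W j) * (\<bar>X i - X j\<bar> powr (1 - m) / (X i - X j)))"
    by (intro sum.cong refl sum_mult_of_bool_diff) auto
  finally show ?thesis by simp
qed

lemma convex_on_powr_nonpos: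
  fixes q :: real
  assumes "q \<le> 0"
  shows "convex_on {0<..} (\<lambda>x. x powr q)"
proof (rule f''_ge0_imp_convex)
  show "((\<lambda>x. q * x powr (q - 1)) has_real_derivative q * ((q - 1) * x powr (q - 2))) (at x)"
    if "x \<in> {0<..}" for x
    using that by (auto intro!: derivative_eq_intros)
  show "0 \<le> q * ((q - 1) * x powr (q - 2))" for x
    using assms by (intro mult_nonpos_nonpos) (auto intro: mult_nonpos_nonneg)
qed (auto intro!: derivative_eq_intros)

lemma sum_powr_mult_le_weighted_sum:
  fixes h g :: "'a \<Rightarrow> real" and q :: real
  assumes S: "finite S" "S \<noteq> {}" and pos: "\<And>l. l \<in> S \<Longrightarrow> h l > 0 \<and> g l > 0" and q: "q \<le> 0"
  shows "(sum g S) powr q * (sum h S) powr (1 - q) \<le> (\<Sum>l\<in>S. h l powr (1 - q) * g l powr q)"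
proof -
  define H where "H = sum h S"
  have H: "H > 0" unfolding H_def using S pos by (intro sum_pos) auto
  have "(\<Sum>l\<in>S. (h l / H) *\<^sub>R (g l / h l)) powr q \<le> (\<Sum>l\<in>S. h l / H * (g l / h l) powr q)"
  proof (rule convex_on_sum[OF S convex_on_powr_nonpos[OF q]])
    show "(\<Sum>l\<in>S. h l / H) = 1" using H by (simp add: H_def sum_divide_distrib[symmetric])
  qed (use pos H in \<open>auto simp: less_imp_le\<close>)
  also have "(\<Sum>l\<in>S. (h l / H) *\<^sub>R (g l / h l)) = sum g S / H"
    unfolding sum_divide_distrib using pos by (intro sum.cong) fastforce+
  also have "(\<Sum>l\<in>S. h l / H * (g l / h l) powr q) = (\<Sum>l\<in>S. h l powr (1 - q) * g l powr q) / H"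
    unfolding sum_divide_distrib
  proof (rule sum.cong[OF refl])
    fix l assume "l \<in> S"
    with pos have "h l > 0" "g l > 0" by auto
    then show "h l / H * (g l / h l) powr q = h l powr (1 - q) * g l powr q / H"
      by (simp add: powr_divide powr_diff)
  qed
  finally have jensen: "(sum g S / H) powr q \<le> (\<Sum>l\<in>S. h l powr (1 - q) * g l powr q) / H" .
  have "sum g S \<ge> 0"
    using pos by (intro sum_nonneg) (auto simp: less_imp_le)
  then have "(sum g S) powr q / H powr q \<le> (\<Sum>l\<in>S. h l powr (1 - q) * g l powr q) / H"
    using jensen H by (simp add: powr_divide)
  then have "(sum g S) powr q * (H / H powr q) \<le> (\<Sum>l\<in>S. h l powr (1 - q) * g l powr q)"
    using H by (simp add: field_simps)
  then show ?thesis
    using H by (simp add: H_def powr_diff)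
qed

definition neighbour_sum :: "real \<Rightarrow> nat \<Rightarrow> (nat \<Rightarrow> real) \<Rightarrow> real" where
  "neighbour_sum m p Y = (\<Sum>i=1..<p. (Y (Suc i) - Y i) powr (1 - m))"

definition pair_sum :: "real \<Rightarrow> nat \<Rightarrow> (nat \<Rightarrow> real) \<Rightarrow> real" where
  "pair_sum m p Y = (\<Sum>i\<in>{1..p}. \<Sum>j\<in>{1..p} - {i}. \<bar>Y i - Y j\<bar> powr (1 - m))"

lemma neighbour_sum_pos:
  assumes "Y \<in> Rp p" "p \<ge> 2"
  shows "neighbour_sum m p Y > 0"
  unfolding neighbour_sum_def
proof (intro sum_pos)
  show "(Y (Suc i) - Y i) powr (1 - m) > 0" if "i \<in> {1..<p}" for i
  proof -
    have "Y i < Y (Suc i)" using assms(1) that unfolding Rp_def by auto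
    then show ?thesis by simp
  qed
qed (use assms(2) in auto)

lemma pair_sum_pos:
  assumes Y: "Y \<in> Rp p" and p: "p \<ge> 2"
  shows "pair_sum m p Y > 0"
proof -
  have "0 < \<bar>Y 1 - Y 2\<bar> powr (1 - m)"
    using Rp_neq[OF Y, of 1 2] p by simp
  also have "\<dots> \<le> (\<Sum>j\<in>{1..p} - {1}. \<bar>Y 1 - Y j\<bar> powr (1 - m))"
    using p by (intro member_le_sum) auto
  also have "\<dots> \<le> pair_sum m p Y"
    unfolding pair_sum_def using p by (intro member_le_sum[of 1 "{1..p}"] sum_nonneg) auto
  finally show ?thesis .
qed

lemma Cp_eq_inverse_SUP: "Cp m p = 1 / (SUP Y\<in>Rp p. pair_sum m p Y / neighbour_sum m p Y)"
  unfolding Cp_def pair_sum_def neighbour_sum_def by (simp add: abs_minus_commute)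

text \<open>The weights are chosen so that W_{i+1} - W_i cancels the factor (X_{i+1} - X_i)^{-m} of
  the neighbour force at X, leaving the gap (Y_{i+1} - Y_i)^{1-m}.\<close>
definition test_weight :: "real \<Rightarrow> (nat \<Rightarrow> real) \<Rightarrow> (nat \<Rightarrow> real) \<Rightarrow> nat \<Rightarrow> real" where
  "test_weight m X Y k = (\<Sum>l\<in>{1..<k}. (X (Suc l) - X l) powr m * (Y (Suc l) - Y l) powr (1 - m))"

lemma test_weight_diff:
  assumes "1 \<le> j" "j \<le> i"
  shows "test_weight m X Y i - test_weight m X Y j
       = (\<Sum>l\<in>{j..<i}. (X (Suc l) - X l) powr m * (Y (Suc l) - Y l) powr (1 - m))"
proof -
  have "{1..<i} = {1..<j} \<union> {j..<i}" "{1..<j} \<inter> {j..<i} = {}" using assms by auto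
  then show ?thesis unfolding test_weight_def by (simp add: sum.union_disjoint)
qed

lemma test_weight_neighbour:
  assumes X: "X \<in> Rp p" and i: "i \<in> {1..<p}"
  shows "(test_weight m X Y (Suc i) - test_weight m X Y i)
           * ((X (Suc i) - X i) powr (1 - m) / (X (Suc i) - X i))
       = (Y (Suc i) - Y i) powr (1 - m)"
proof -
  define h where "h = X (Suc i) - X i"
  have "h > 0" using X i unfolding Rp_def h_def by auto
  have "(test_weight m X Y (Suc i) - test_weight m X Y i) * (h powr (1 - m) / h)
      = (Y (Suc i) - Y i) powr (1 - m) * (h powr m * h powr (1 - m) / h)"
    using i test_weight_diff[of i "Suc i" m X Y] by (simp add: h_def)
  also have "h powr m * h powr (1 - m) = h" using \<open>h > 0\<close> by (simp add: powr_add[symmetric])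
  finally show ?thesis using \<open>h > 0\<close> by (simp add: h_def)
qed

lemma test_weight_self:
  assumes X: "X \<in> Rp p" and k: "1 \<le> k" "k \<le> p"
  shows "test_weight m X X k = X k - X 1"
proof -
  have "test_weight m X X k = (\<Sum>l\<in>{1..<k}. X (Suc l) - X l)"
    unfolding test_weight_def
  proof (rule sum.cong[OF refl])
    fix l assume "l \<in> {1..<k}"
    then have "X (Suc l) - X l > 0" using X k unfolding Rp_def by auto
    then show "(X (Suc l) - X l) powr m * (X (Suc l) - X l) powr (1 - m) = X (Suc l) - X l"
      by (simp add: powr_add[symmetric])
  qed
  also have "\<dots> = X k - X 1" using k by (simp add: sum_Suc_diff')
  finally show ?thesis .
qed

lemma test_weight_pair_ge:
  assumes m: "m > 1" and X: "X \<in> Rp p" and Y: "Y \<in> Rp p"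
    and ij: "i \<in> {1..p}" "j \<in> {1..p}" "i \<noteq> j"
  shows "\<bar>Y i - Y j\<bar> powr (1 - m)
       \<le> (test_weight m X Y i - test_weight m X Y j) * (\<bar>X i - X j\<bar> powr (1 - m) / (X i - X j))"
proof -
  have ge: "\<bar>Y i - Y j\<bar> powr (1 - m)
       \<le> (test_weight m X Y i - test_weight m X Y j) * (\<bar>X i - X j\<bar> powr (1 - m) / (X i - X j))"
    if "1 \<le> j" "j < i" "i \<le> p" for i j
  proof -
    define H where "H = X i - X j"
    have gaps: "X (Suc l) - X l > 0 \<and> Y (Suc l) - Y l > 0" if "l \<in> {j..<i}" for l
      using X Y that \<open>1 \<le> j\<close> \<open>i \<le> p\<close> unfolding Rp_def by auto
    have "(\<Sum>l\<in>{j..<i}. Y (Suc l) - Y l) powr (1 - m) * (\<Sum>l\<in>{j..<i}. X (Suc l) - X l) powr m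
        \<le> (\<Sum>l\<in>{j..<i}. (X (Suc l) - X l) powr m * (Y (Suc l) - Y l) powr (1 - m))"
      using sum_powr_mult_le_weighted_sum[where S="{j..<i}" and q="1 - m", OF _ _ gaps] \<open>j < i\<close> m by simp
    moreover have "(\<Sum>l\<in>{j..<i}. X (Suc l) - X l) = H" "(\<Sum>l\<in>{j..<i}. Y (Suc l) - Y l) = Y i - Y j"
      using \<open>j < i\<close> by (simp_all add: sum_Suc_diff' H_def)
    moreover have "H > 0" "Y i - Y j > 0"
      using Rp_less[OF X] Rp_less[OF Y] that by (auto simp: H_def)
    ultimately show ?thesis
      using test_weight_diff[of j i m X Y] \<open>j < i\<close> \<open>1 \<le> j\<close>
      by (simp add: H_def[symmetric] powr_diff field_simps)
  qed
  show ?thesis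
  proof (cases "j < i")
    case True
    then show ?thesis using ge ij by auto
  next
    case False
    have swap: "(b - a) * (\<bar>y - x\<bar> powr (1 - m) / (y - x)) = (a - b) * (\<bar>x - y\<bar> powr (1 - m) / (x - y))"
      for a b x y :: real
    proof -
      have "y - x = - (x - y)" "b - a = - (a - b)" by simp_all
      then show ?thesis
        by (simp only: abs_minus_cancel divide_minus_right mult_minus_left mult_minus_right minus_minus)
    qed
    have "\<bar>Y i - Y j\<bar> powr (1 - m) = \<bar>Y j - Y i\<bar> powr (1 - m)"
      by (simp add: abs_minus_commute)
    also have "\<dots> \<le> (test_weight m X Y j - test_weight m X Y i) * (\<bar>X j - X i\<bar> powr (1 - m) / (X j - X i))"
      using False ge[of i j] ij by auto
    also have "\<dots> = (test_weight m X Y i - test_weight m X Y j) * (\<bar>X i - X j\<bar> powr (1 - m) / (X i - X j))"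
      by (rule swap)
    finally show ?thesis .
  qed
qed

lemma test_weight_inner_ge:
  assumes X: "X \<in> Rp p" and p: "p \<ge> 2"
  obtains \<delta> where "\<delta> > 0"
    and "\<And>Y. \<delta> * neighbour_sum m p Y \<le> (\<Sum>k\<in>{1..p}. test_weight m X Y k * X k)"
proof
  define t where "t l = (X (Suc l) - X l) powr m * (\<Sum>k\<in>{Suc l..p}. X k)" for l
  have t_pos: "t l > 0" if "l \<in> {1..<p}" for l
  proof -
    have "X (Suc l) - X l > 0" using X that unfolding Rp_def by auto
    then show ?thesis using Rp_tail_sum_pos[OF X] that unfolding t_def by auto
  qed
  show "Min (t ` {1..<p}) > 0"
    using p t_pos by (subst Min_gr_iff) auto
  fix Y
  have "Min (t ` {1..<p}) * neighbour_sum m p Y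
      = (\<Sum>l\<in>{1..<p}. Min (t ` {1..<p}) * (Y (Suc l) - Y l) powr (1 - m))"
    unfolding neighbour_sum_def by (simp add: sum_distrib_left)
  also have "\<dots> \<le> (\<Sum>l\<in>{1..<p}. t l * (Y (Suc l) - Y l) powr (1 - m))"
    by (intro sum_mono mult_right_mono) auto
  also have "\<dots> = (\<Sum>k\<in>{1..p}. test_weight m X Y k * X k)"
    unfolding test_weight_def sum_partial_sums_mult t_def by (simp add: mult_ac)
  finally show "Min (t ` {1..<p}) * neighbour_sum m p Y \<le> (\<Sum>k\<in>{1..p}. test_weight m X Y k * X k)" .
qed

lemma critical_point_neighbour_sum_identity:
  assumes m: "m > 1" and crit: "critical_point m chi \<alpha> p X" and Y: "Y \<in> Rp p"
  shows "neighbour_sum m p Y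
       = chi * (\<Sum>i\<in>{1..p}. \<Sum>j\<in>{1..p} - {i}. (test_weight m X Y i - test_weight m X Y j)
                  * (\<bar>X i - X j\<bar> powr (1 - m) / (X i - X j)))
         + \<alpha> * (\<Sum>k\<in>{1..p}. test_weight m X Y k * X k)"
proof -
  have X: "X \<in> Rp p" using crit unfolding critical_point_def by simp
  have "neighbour_sum m p Y = (\<Sum>i=1..<p. (test_weight m X Y (Suc i) - test_weight m X Y i)
      * ((X (Suc i) - X i) powr (1 - m) / (X (Suc i) - X i)))"
    unfolding neighbour_sum_def using test_weight_neighbour[OF X] by simp
  then show ?thesis
    using critical_point_weighted_identity[OF m crit] by simp
qed

lemma critical_point_neighbour_sum_ge:
  assumes m: "m > 1" and chi: "chi > 0" and crit: "critical_point m chi \<alpha> p X" and Y: "Y \<in> Rp p"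
  shows "chi * pair_sum m p Y + \<alpha> * (\<Sum>k\<in>{1..p}. test_weight m X Y k * X k) \<le> neighbour_sum m p Y"
proof -
  have X: "X \<in> Rp p" using crit unfolding critical_point_def by simp
  have "pair_sum m p Y \<le> (\<Sum>i\<in>{1..p}. \<Sum>j\<in>{1..p} - {i}.
      (test_weight m X Y i - test_weight m X Y j) * (\<bar>X i - X j\<bar> powr (1 - m) / (X i - X j)))"
    unfolding pair_sum_def by (intro sum_mono test_weight_pair_ge[OF m X Y]) auto
  then show ?thesis
    using critical_point_neighbour_sum_identity[OF m crit Y] chi by simp
qed

lemma critical_point_neighbour_sum_self:
  assumes m: "m > 1" and crit: "critical_point m chi \<alpha> p X"
  shows "neighbour_sum m p X = chi * pair_sum m p X + \<alpha> * (\<Sum>k\<in>{1..p}. test_weight m X X k * X k)"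
proof -
  have X: "X \<in> Rp p" using crit unfolding critical_point_def by simp
  have "(test_weight m X X i - test_weight m X X j) * (\<bar>X i - X j\<bar> powr (1 - m) / (X i - X j))
      = \<bar>X i - X j\<bar> powr (1 - m)" if "i \<in> {1..p}" "j \<in> {1..p} - {i}" for i j
    using test_weight_self[OF X, of i m] test_weight_self[OF X, of j m] Rp_neq[OF X, of i j] that
    by auto
  then show ?thesis
    unfolding pair_sum_def critical_point_neighbour_sum_identity[OF m crit X] by simp
qed

lemma critical_point_Cp_eq:
  assumes m: "m > 1" and chi: "chi > 0" and p: "p \<ge> 2" and crit: "critical_point m chi 0 p X"
  shows "Cp m p = chi"
proof -
  have X: "X \<in> Rp p" using crit unfolding critical_point_def by simp
  have "(SUP Y\<in>Rp p. pair_sum m p Y / neighbour_sum m p Y) = 1 / chi"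
  proof (rule cSup_eq_maximum)
    have "pair_sum m p X / neighbour_sum m p X = 1 / chi"
      using critical_point_neighbour_sum_self[OF m crit] neighbour_sum_pos[OF X p, of m]
        pair_sum_pos[OF X p, of m] chi
      by (simp add: field_simps)
    then show "1 / chi \<in> (\<lambda>Y. pair_sum m p Y / neighbour_sum m p Y) ` Rp p"
      using X by force
    show "r \<le> 1 / chi" if "r \<in> (\<lambda>Y. pair_sum m p Y / neighbour_sum m p Y) ` Rp p" for r
      using that critical_point_neighbour_sum_ge[OF m chi crit] neighbour_sum_pos[OF _ p] chi
      by (force simp: field_simps)
  qed
  then show ?thesis unfolding Cp_eq_inverse_SUP by simp
qed

lemma critical_point_Cp_gt:
  assumes m: "m > 1" and chi: "chi > 0" and \<alpha>: "\<alpha> > 0" and p: "p \<ge> 2"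
    and crit: "critical_point m chi \<alpha> p X"
  shows "Cp m p > chi"
proof -
  have X: "X \<in> Rp p" using crit unfolding critical_point_def by simp
  obtain \<delta> where \<delta>: "\<delta> > 0"
    and inner: "\<And>Y. \<delta> * neighbour_sum m p Y \<le> (\<Sum>k\<in>{1..p}. test_weight m X Y k * X k)"
    using test_weight_inner_ge[OF X p] by blast
  define S where "S = (SUP Y\<in>Rp p. pair_sum m p Y / neighbour_sum m p Y)"
  have bound: "pair_sum m p Y / neighbour_sum m p Y \<le> (1 - \<alpha> * \<delta>) / chi" if Y: "Y \<in> Rp p" for Y
  proof -
    have "chi * pair_sum m p Y + \<alpha> * (\<delta> * neighbour_sum m p Y) \<le> neighbour_sum m p Y"
      using critical_point_neighbour_sum_ge[OF m chi crit Y] mult_left_mono[OF inner[of Y] less_imp_le[OF \<alpha>]]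
      by simp
    then show ?thesis
      using neighbour_sum_pos[OF Y p, of m] chi by (simp add: field_simps)
  qed
  have "S \<le> (1 - \<alpha> * \<delta>) / chi"
    unfolding S_def using X bound by (intro cSUP_least) auto
  moreover have "S \<ge> pair_sum m p X / neighbour_sum m p X"
    unfolding S_def using X bound by (intro cSUP_upper bdd_aboveI2) auto
  moreover have "pair_sum m p X / neighbour_sum m p X > 0"
    using pair_sum_pos[OF X p] neighbour_sum_pos[OF X p] by simp
  ultimately have "0 < S" "chi * S < 1"
    using mult_pos_pos[OF \<alpha> \<delta>] chi by (auto simp: field_simps)
  then show ?thesis
    unfolding Cp_eq_inverse_SUP S_def[symmetric] by (simp add: field_simps)
qed

theorem corollary3p5:
  fixes m chi \<alpha> :: real and p :: nat
  assumes "m > 1" and "chi > 0" and "\<alpha> > 0" and "p \<ge> 2"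
  shows "(chi > Cp m p \<longrightarrow>
            (\<nexists>X. critical_point m chi 0 p X) \<and> (\<nexists>X. critical_point m chi \<alpha> p X))
       \<and> (chi < Cp m p \<longrightarrow> (\<nexists>X. critical_point m chi 0 p X))
       \<and> (chi = Cp m p \<longrightarrow> (\<nexists>X. critical_point m chi \<alpha> p X))"
  using critical_point_Cp_eq[OF assms(1,2,4)] critical_point_Cp_gt[OF assms]
  by (metis not_less_iff_gr_or_eq)

end
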